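(* Let $q=q(n)$, $C'=C'(n)\ge1$ and $r=r(n)$ be such that $s=C'nq$ is a positive integer with $s\le n$, $\ln n=o(nq)$ and $r=o\!\left(\frac{1}{C'nq}\right)$. Let $N_2(r)$ be the size of a maximum matching in $\mathbb H_{[s]}(r)$. Then there is $s_2(r)$ with $s_2(r)\sim C'nqr$ such that $$N'_2(r)\preceq_{1-o(1/n)}N_2(r),$$ where $N'_2(r)$ has binomial distribution $\mathrm{Bin}(C'nq,s_2(r))$.
   Context: Let $\mathcal X_1,\mathcal X_2$ be disjoint $n$-element sets. For an integer $1\le s\le n$ and $r\in[0,1]$, $\mathbb H_{[s]}(r)$ is the random bipartite graph with parts $\mathcal X_1,\mathcal X_2$ constructed as follows: independently for $i=1,2$ choose $\mathcal X'_i\subseteq\mathcal X_i$ uniformly at random among all $s$-element subsets, and then make each pair in $\mathcal X'_1\times\mathcal X'_2$ an edge independently with probability $r$. For integer-valued random variables $X,Y$, $X\preceq_{1-o(1/n)}Y$ means there exists a coupling of $X$ and $Y$ with $\Pr\{X\le Y\}\ge1-\varepsilon_n$ for some $\varepsilon_n=o(1/n)$. *)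

theory Defs
  imports "HOL-Probability.Probability" "HOL-Library.Landau_Symbols"
begin

text \<open>Both parts X1, X2 are represented by the index set {..<n}; an edge between
  i in X1 and j in X2 is the pair (i, j).\<close>

definition ksubsets :: "nat \<Rightarrow> nat \<Rightarrow> nat set set" where
  "ksubsets n s = {A. A \<subseteq> {..<n} \<and> card A = s}"

definition H_s :: "nat \<Rightarrow> nat \<Rightarrow> real \<Rightarrow> (nat \<times> nat) set pmf" where
  "H_s n s r =
     do { A \<leftarrow> pmf_of_set (ksubsets n s);
          B \<leftarrow> pmf_of_set (ksubsets n s);
          f \<leftarrow> Pi_pmf (A \<times> B) False (\<lambda>_. bernoulli_pmf r);
          return_pmf {e. f e} }"

definition is_matching :: "(nat \<times> nat) set \<Rightarrow> (nat \<times> nat) set \<Rightarrow> bool" where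
  "is_matching E M \<longleftrightarrow> M \<subseteq> E \<and> inj_on fst M \<and> inj_on snd M"

definition max_matching :: "(nat \<times> nat) set \<Rightarrow> nat" where
  "max_matching E = Max (card ` {M. is_matching E M})"

definition N2_dist :: "nat \<Rightarrow> nat \<Rightarrow> real \<Rightarrow> nat pmf" where
  "N2_dist n s r = map_pmf max_matching (H_s n s r)"

definition dominated_with :: "nat pmf \<Rightarrow> nat pmf \<Rightarrow> real \<Rightarrow> bool" where
  "dominated_with X Y eps \<longleftrightarrow>
     (\<exists>\<mu> :: (nat \<times> nat) pmf. map_pmf fst \<mu> = X \<and> map_pmf snd \<mu> = Y \<and>
        measure_pmf.prob \<mu> {(x, y). x \<le> y} \<ge> 1 - eps)"

end

theory Submission
  imports Defs "HOL-Real_Asymp.Real_Asymp"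
begin

(* Fix the two random s-sets A, B and let the edges of A x B be independent
   Bernoulli(r).  Scan the vertices of A in increasing order; the vertex a looks only at a
   window of k = s - m still unmatched vertices of B and, if it has an edge into the window,
   is matched to the least such neighbour.  Every window has exactly k vertices and every
   step inspects fresh edges, so the number of successful steps is Bin(s, 1 - (1 - r)^k).
   As long as at most m steps succeed the windows really consist of unmatched vertices, so
   the successes form a matching; hence on the event "count <= m" the count is at most the
   maximum matching N_2.  This gives the coupling with error P(Bin > m).
   Choosing m = ceil(s^2 r + sqrt(s ln n)), Hoeffding's inequality bounds this error by
   1/n^2 = o(1/n), while m = o(s) and s r = o(1) give 1 - (1 - r)^(s-m) ~ s r = C' n q r. *)


definition first_elems :: "nat \<Rightarrow> nat set \<Rightarrow> nat set" where
  "first_elems k S = set (take k (sorted_list_of_set S))"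

lemma first_elems_subset: "finite S \<Longrightarrow> first_elems k S \<subseteq> S"
  unfolding first_elems_def using set_take_subset[of k "sorted_list_of_set S"] by simp

lemma card_first_elems: "finite S \<Longrightarrow> card (first_elems k S) = min k (card S)"
  unfolding first_elems_def by (simp add: distinct_card)

text \<open>The window inspected by the greedy procedure when the vertices U of B are already
  used: k unused vertices of B if there are that many, otherwise (a situation that is
  irrelevant on the good event) some k vertices of B.  Its size is always exactly k, which
  makes every step succeed with the same probability.\<close>
definition window :: "nat set \<Rightarrow> nat \<Rightarrow> nat set \<Rightarrow> nat set" where
  "window B k U = (if k \<le> card (B - U) then first_elems k (B - U) else first_elems k B)"

lemma window_subset: "finite B \<Longrightarrow> window B k U \<subseteq> B"
  unfolding window_def using first_elems_subset[of "B - U" k] first_elems_subset[of B k] by auto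

lemma card_window: "finite B \<Longrightarrow> k \<le> card B \<Longrightarrow> card (window B k U) = k"
  unfolding window_def by (simp add: card_first_elems)

lemma window_unused: "finite B \<Longrightarrow> k \<le> card (B - U) \<Longrightarrow> window B k U \<subseteq> B - U"
  unfolding window_def using first_elems_subset by simp

fun greedy_match :: "nat set \<Rightarrow> nat \<Rightarrow> nat set \<Rightarrow> nat list \<Rightarrow> (nat \<times> nat \<Rightarrow> bool)
    \<Rightarrow> nat \<times> (nat \<times> nat) set" where
  "greedy_match B k U [] f = (0, {})"
| "greedy_match B k U (a # as) f =
     (if {b \<in> window B k U. f (a, b)} = {} then greedy_match B k U as f
      else (let b = Min {b \<in> window B k U. f (a, b)}; R = greedy_match B k (insert b U) as f
            in (Suc (fst R), insert (a, b) (snd R))))"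

lemma greedy_match_cong:
  assumes "finite B" "\<forall>x\<in>set as \<times> B. f x = g x"
  shows "greedy_match B k U as f = greedy_match B k U as g"
  using assms(2)
proof (induction as arbitrary: U)
  case Nil then show ?case by simp
next
  case (Cons a as)
  have row: "{b \<in> window B k U. f (a, b)} = {b \<in> window B k U. g (a, b)}"
    using Cons.prems window_subset[OF assms(1)] by auto
  have "greedy_match B k V as f = greedy_match B k V as g" for V
    using Cons by auto
  then show ?case by (simp only: greedy_match.simps row)
qed

text \<open>Invariant of the procedure: if at most m steps succeed and k + m vertices of B are
  available, all windows avoid the used vertices, so the chosen pairs form a matching of
  size equal to the number of successes.\<close>
lemma greedy_match_is_matching:
  assumes "finite B" "U \<subseteq> B" "distinct as" "card U + fst (greedy_match B k U as f) \<le> m"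
    "k + m \<le> card B"
  shows "snd (greedy_match B k U as f) \<subseteq> {e. f e} \<inter> (set as \<times> (B - U))
       \<and> inj_on fst (snd (greedy_match B k U as f)) \<and> inj_on snd (snd (greedy_match B k U as f))
       \<and> card (snd (greedy_match B k U as f)) = fst (greedy_match B k U as f)"
  using assms(2-4)
proof (induction as arbitrary: U)
  case Nil then show ?case by simp
next
  case (Cons a as)
  define H where "H = {b \<in> window B k U. f (a, b)}"
  show ?case
  proof (cases "H = {}")
    case True
    then have eq: "greedy_match B k U (a # as) f = greedy_match B k U as f" by (simp add: H_def)
    have "card U + fst (greedy_match B k U as f) \<le> m" using Cons.prems(3) unfolding eq .
    then have IH: "snd (greedy_match B k U as f) \<subseteq> {e. f e} \<inter> (set as \<times> (B - U))
       \<and> inj_on fst (snd (greedy_match B k U as f)) \<and> inj_on snd (snd (greedy_match B k U as f))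
       \<and> card (snd (greedy_match B k U as f)) = fst (greedy_match B k U as f)"
      using Cons.IH[of U] Cons.prems(1,2) by simp
    have "set as \<times> (B - U) \<subseteq> set (a # as) \<times> (B - U)" by auto
    then show ?thesis unfolding eq using IH by blast
  next
    case False
    define b where "b = Min H"
    define R where "R = greedy_match B k (insert b U) as f"
    have eq: "greedy_match B k U (a # as) f = (Suc (fst R), insert (a, b) (snd R))"
      unfolding greedy_match.simps H_def[symmetric] using False by (simp add: Let_def b_def R_def)
    have finU: "finite U" using finite_subset[OF Cons.prems(1) assms(1)] .
    have "card (B - U) = card B - card U" using Cons.prems(1) finU by (simp add: card_Diff_subset)
    moreover have "card U < m" using Cons.prems(3) unfolding eq by simp
    ultimately have "window B k U \<subseteq> B - U" using window_unused assms(1,5) by simp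
    moreover have "finite H" using window_subset[OF assms(1)] assms(1)
      unfolding H_def by (auto intro: finite_subset)
    then have "b \<in> H" using Min_in False unfolding b_def by blast
    ultimately have bB: "b \<in> B - U" and fab: "f (a, b)" unfolding H_def by auto
    have IH: "snd R \<subseteq> {e. f e} \<inter> (set as \<times> (B - insert b U)) \<and> inj_on fst (snd R)
       \<and> inj_on snd (snd R) \<and> card (snd R) = fst R"
      unfolding R_def
    proof (rule Cons.IH)
      show "insert b U \<subseteq> B" using bB Cons.prems(1) by auto
      show "distinct as" using Cons.prems(2) by simp
      show "card (insert b U) + fst (greedy_match B k (insert b U) as f) \<le> m"
        using Cons.prems(3) bB finU unfolding eq R_def by simp
    qed
    have aR: "a \<notin> fst ` snd R" using IH Cons.prems(2) by auto
    have bR: "b \<notin> snd ` snd R" using IH by auto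
    have finR: "finite (snd R)"
      by (rule finite_subset[of _ "set as \<times> B"]) (use IH assms(1) in auto)
    have "(a, b) \<notin> snd R" using aR by force
    then have "card (insert (a, b) (snd R)) = Suc (fst R)" using finR IH by simp
    moreover have "insert (a, b) (snd R) \<subseteq> {e. f e} \<inter> (set (a # as) \<times> (B - U))"
      using IH fab bB by auto
    moreover have "inj_on fst (insert (a, b) (snd R))" "inj_on snd (insert (a, b) (snd R))"
      using IH aR bR by (simp_all add: inj_on_insert) blast+
    ultimately show ?thesis unfolding eq by simp
  qed
qed

lemma max_matching_ge:
  assumes "finite E" "is_matching E M"
  shows "card M \<le> max_matching E"
proof -
  have "{M. is_matching E M} \<subseteq> Pow E" unfolding is_matching_def by auto
  then have "finite {M. is_matching E M}" using assms(1) by (meson finite_Pow_iff finite_subset)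
  then show ?thesis unfolding max_matching_def using assms(2) by (intro Max_ge) auto
qed

lemma greedy_count_le_max_matching:
  assumes "finite B" "finite {e. f e}" "distinct as" "k + m \<le> card B"
    "fst (greedy_match B k {} as f) \<le> m"
  shows "fst (greedy_match B k {} as f) \<le> max_matching {e. f e}"
proof -
  have "card {} + fst (greedy_match B k {} as f) \<le> m" using assms(5) by simp
  from greedy_match_is_matching[OF assms(1) _ assms(3) this assms(4)]
  have "is_matching {e. f e} (snd (greedy_match B k {} as f))"
    and "card (snd (greedy_match B k {} as f)) = fst (greedy_match B k {} as f)"
    unfolding is_matching_def by auto
  then show ?thesis using max_matching_ge[OF assms(2)] by metis
qed

lemma row_hit_law:
  assumes "finite B" "T \<subseteq> B" "0 \<le> r" "r \<le> 1"
  shows "map_pmf (\<lambda>g. \<exists>b\<in>T. g (a, b)) (Pi_pmf ({a} \<times> B) False (\<lambda>_. bernoulli_pmf r))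
         = bernoulli_pmf (1 - (1 - r) ^ card T)"
proof -
  let ?P = "Pi_pmf ({a} \<times> B) False (\<lambda>_. bernoulli_pmf r)"
  let ?h = "\<lambda>g. \<exists>b\<in>T. g (a, b)"
  have fin: "finite ({a} \<times> B)" using assms(1) by simp
  have miss: "?h -` {False} = Pi ({a} \<times> B) (\<lambda>x. if x \<in> {a} \<times> T then {False} else UNIV)"
    using assms(2) by (auto simp: Pi_def)
  have "measure_pmf.prob ?P (?h -` {False}) =
        (\<Prod>x\<in>{a} \<times> B. measure_pmf.prob (bernoulli_pmf r) (if x \<in> {a} \<times> T then {False} else UNIV))"
    unfolding miss by (rule measure_Pi_pmf_Pi[OF fin])
  also have "\<dots> = (\<Prod>x\<in>{a} \<times> B. if x \<in> {a} \<times> T then 1 - r else 1)"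
    using assms(3,4) by (intro prod.cong refl) (auto simp: measure_pmf_single)
  also have "\<dots> = (1 - r) ^ card ({a} \<times> B \<inter> {a} \<times> T)"
    using fin by (simp add: prod.If_cases)
  also have "{a} \<times> B \<inter> {a} \<times> T = {a} \<times> T" using assms(2) by auto
  finally have F: "measure_pmf.prob ?P (?h -` {False}) = (1 - r) ^ card T"
    by (simp add: card_cartesian_product_singleton)
  have "?h -` {True} = UNIV - ?h -` {False}" by auto
  then have T: "measure_pmf.prob ?P (?h -` {True}) = 1 - (1 - r) ^ card T"
    using F measure_pmf.prob_compl[of "?h -` {False}" ?P] by simp
  have "0 \<le> (1 - r) ^ card T" "(1 - r) ^ card T \<le> 1"
    using assms(3,4) by (auto intro: power_le_one)
  then show ?thesis
  proof (intro pmf_eqI)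
    fix x :: bool
    show "pmf (map_pmf ?h ?P) x = pmf (bernoulli_pmf (1 - (1 - r) ^ card T)) x"
      using F T \<open>0 \<le> (1 - r) ^ card T\<close> \<open>(1 - r) ^ card T \<le> 1\<close>
      by (cases x) (simp_all add: pmf_map)
  qed
qed

lemma binomial_pmf_Suc_cases:
  assumes "p \<in> {0..1}"
  shows "bind_pmf (bernoulli_pmf p) (\<lambda>b. if b then map_pmf Suc (binomial_pmf n p) else binomial_pmf n p)
         = binomial_pmf (Suc n) p"
  unfolding binomial_pmf_Suc[OF assms]
  by (intro bind_pmf_cong refl) (simp_all add: bind_return_pmf' map_pmf_def[symmetric])

text \<open>The law of the number of successes: each step inspects a fresh row of edges
  restricted to a window of size k, so the count is Bin(|as|, 1 - (1 - r)^k).\<close>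
lemma greedy_count_law:
  assumes "finite B" "k \<le> card B" "distinct as" "0 \<le> r" "r \<le> 1"
  shows "map_pmf (\<lambda>f. fst (greedy_match B k U as f)) (Pi_pmf (set as \<times> B) False (\<lambda>_. bernoulli_pmf r))
         = binomial_pmf (length as) (1 - (1 - r) ^ k)"
  using assms(3)
proof (induction as arbitrary: U)
  let ?p = "1 - (1 - r) ^ k"
  have pin: "?p \<in> {0..1}" using assms(4,5) by (auto intro: power_le_one)
  {
    case Nil
    then show ?case using pin by (simp add: binomial_pmf_0)
  next
    case (Cons a as)
    let ?W = "window B k U"
    let ?P = "Pi_pmf ({a} \<times> B) False (\<lambda>_. bernoulli_pmf r)"
    let ?Q = "Pi_pmf (set as \<times> B) False (\<lambda>_. bernoulli_pmf r)"
    let ?merge = "\<lambda>(g, h) x. if x \<in> {a} \<times> B then g x else h x"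
    let ?hit = "\<lambda>g. \<exists>b\<in>?W. g (a, b)"
    let ?rest = "\<lambda>b. if b then map_pmf Suc (binomial_pmf (length as) ?p) else binomial_pmf (length as) ?p"
    have a_new: "a \<notin> set as" and dist: "distinct as" using Cons.prems by auto
    have "set (a # as) \<times> B = {a} \<times> B \<union> set as \<times> B" by auto
    then have split: "Pi_pmf (set (a # as) \<times> B) False (\<lambda>_. bernoulli_pmf r) = map_pmf ?merge (pair_pmf ?P ?Q)"
      using assms(1) a_new by (simp only:) (intro Pi_pmf_union; auto)
    (* once the first row g is fixed, the rest of the procedure reads only the other rows h *)
    have step: "fst (greedy_match B k U (a # as) (?merge (g, h))) =
       (if ?hit g then Suc (fst (greedy_match B k (insert (Min {b \<in> ?W. g (a, b)}) U) as h))
        else fst (greedy_match B k U as h))" for g h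
    proof -
      have "{b \<in> ?W. ?merge (g, h) (a, b)} = {b \<in> ?W. g (a, b)}"
        using window_subset[OF assms(1)] by auto
      moreover have "greedy_match B k V as (?merge (g, h)) = greedy_match B k V as h" for V
        using a_new assms(1) by (intro greedy_match_cong) auto
      ultimately show ?thesis by (simp add: Let_def)
    qed
    have "map_pmf (\<lambda>f. fst (greedy_match B k U (a # as) f)) (Pi_pmf (set (a # as) \<times> B) False (\<lambda>_. bernoulli_pmf r))
       = bind_pmf ?P (\<lambda>g. map_pmf (\<lambda>h. fst (greedy_match B k U (a # as) (?merge (g, h)))) ?Q)"
      unfolding split pair_pmf_def by (simp add: map_bind_pmf map_pmf_def bind_assoc_pmf bind_return_pmf)
    also have "\<dots> = bind_pmf ?P (\<lambda>g. ?rest (?hit g))"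
    proof (intro bind_pmf_cong refl)
      fix g
      have "map_pmf (\<lambda>h. Suc (fst (greedy_match B k V as h))) ?Q = map_pmf Suc (binomial_pmf (length as) ?p)"
        for V using Cons.IH[OF dist, of V, symmetric] by (simp add: pmf.map_comp o_def)
      then show "map_pmf (\<lambda>h. fst (greedy_match B k U (a # as) (?merge (g, h)))) ?Q = ?rest (?hit g)"
        unfolding step using Cons.IH[OF dist] by simp
    qed
    also have "\<dots> = bind_pmf (map_pmf ?hit ?P) ?rest"
      by (simp add: bind_map_pmf)
    also have "map_pmf ?hit ?P = bernoulli_pmf ?p"
      using row_hit_law[of B ?W r a] window_subset[OF assms(1)] card_window[OF assms(1,2)] assms
      by simp
    finally show ?case using binomial_pmf_Suc_cases[OF pin] by simp
  }
qed

lemma ksubsets_finite: "finite (ksubsets n s)"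
  unfolding ksubsets_def by (rule finite_subset[of _ "Pow {..<n}"]) auto

lemma ksubsets_nonempty: "s \<le> n \<Longrightarrow> ksubsets n s \<noteq> {}"
proof -
  assume "s \<le> n"
  then have "{..<s} \<in> ksubsets n s" unfolding ksubsets_def by auto
  then show ?thesis by blast
qed

lemma ksubsets_mem: "A \<in> ksubsets n s \<Longrightarrow> finite A \<and> card A = s"
  unfolding ksubsets_def by (auto intro: finite_subset)

lemma greedy_coupling:
  assumes "s \<le> n" "0 \<le> r" "r \<le> 1" "k + m \<le> s"
  defines "p \<equiv> 1 - (1 - r) ^ k"
  shows "dominated_with (binomial_pmf s p) (N2_dist n s r)
           (measure_pmf.prob (binomial_pmf s p) {x. m < x})"
proof -
  define KS where "KS = pmf_of_set (ksubsets n s)"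
  define PP where "PP = (\<lambda>(A::nat set) (B::nat set). Pi_pmf (A \<times> B) False (\<lambda>_. bernoulli_pmf r))"
  define G where "G = (\<lambda>A B f. (fst (greedy_match B k {} (sorted_list_of_set A) f), max_matching {e. f e}))"
  define \<mu> where "\<mu> = bind_pmf KS (\<lambda>A. bind_pmf KS (\<lambda>B. map_pmf (G A B) (PP A B)))"
  have setKS: "set_pmf KS = ksubsets n s"
    unfolding KS_def using ksubsets_finite ksubsets_nonempty[OF assms(1)] by simp
  have fst_law: "map_pmf fst \<mu> = binomial_pmf s p"
  proof -
    have "map_pmf fst \<mu> = bind_pmf KS (\<lambda>A. bind_pmf KS (\<lambda>B. binomial_pmf s p))"
      unfolding \<mu>_def map_bind_pmf
    proof (intro bind_pmf_cong refl)
      fix A B assume "A \<in> set_pmf KS" "B \<in> set_pmf KS"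
      then have A: "finite A" "card A = s" and B: "finite B" "card B = s"
        using setKS ksubsets_mem by auto
      have "map_pmf fst (map_pmf (G A B) (PP A B)) =
            map_pmf (\<lambda>f. fst (greedy_match B k {} (sorted_list_of_set A) f))
              (Pi_pmf (set (sorted_list_of_set A) \<times> B) False (\<lambda>_. bernoulli_pmf r))"
        using A by (simp add: pmf.map_comp o_def G_def PP_def)
      also have "\<dots> = binomial_pmf s p"
        unfolding p_def using A B assms by (subst greedy_count_law) auto
      finally show "map_pmf fst (map_pmf (G A B) (PP A B)) = binomial_pmf s p" .
    qed
    then show ?thesis by (simp add: bind_pmf_const)
  qed
  have "map_pmf snd \<mu> = bind_pmf KS (\<lambda>A. bind_pmf KS (\<lambda>B.
      map_pmf max_matching (map_pmf (\<lambda>f. {e. f e}) (PP A B))))"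
    unfolding \<mu>_def map_bind_pmf G_def by (simp add: pmf.map_comp o_def)
  also have "\<dots> = N2_dist n s r"
    unfolding N2_dist_def H_s_def KS_def PP_def by (simp add: map_pmf_def[symmetric] map_bind_pmf)
  finally have snd_law: "map_pmf snd \<mu> = N2_dist n s r" .
  have good: "fst z \<le> snd z" if z_support: "z \<in> set_pmf \<mu>" and z_small: "fst z \<le> m" for z
  proof -
    obtain A B where A: "A \<in> set_pmf KS" and B: "B \<in> set_pmf KS"
      and "z \<in> set_pmf (map_pmf (G A B) (PP A B))"
      using z_support unfolding \<mu>_def set_bind_pmf by blast
    then obtain f where f: "f \<in> set_pmf (PP A B)" and z: "z = G A B f"
      unfolding set_map_pmf by blast
    have fA: "finite A" and fB: "finite B" "card B = s" using A B setKS ksubsets_mem by auto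
    have "{e. f e} \<subseteq> A \<times> B"
      using f set_Pi_pmf_subset[of "A \<times> B" False "\<lambda>_. bernoulli_pmf r"] fA fB
      unfolding PP_def by auto
    then have "finite {e. f e}" using fA fB finite_subset by blast
    then show ?thesis
      using greedy_count_le_max_matching[OF fB(1) _ _ _, of f "sorted_list_of_set A" k m]
        z_small assms(4) fB(2) unfolding z G_def by simp
  qed
  have "{x. x \<le> m} = UNIV - {x. m < x}" by auto
  then have "1 - measure_pmf.prob (binomial_pmf s p) {x. m < x} = measure_pmf.prob (binomial_pmf s p) {x. x \<le> m}"
    using measure_pmf.prob_compl[of "{x. m < x}" "binomial_pmf s p"] by simp
  also have "\<dots> = measure_pmf.prob \<mu> {z. fst z \<le> m}"
    unfolding fst_law[symmetric] by (simp add: vimage_def)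
  also have "\<dots> \<le> measure_pmf.prob \<mu> {(x, y). x \<le> y}"
  proof (rule measure_pmf.finite_measure_mono_AE)
    show "AE z in measure_pmf \<mu>. z \<in> {z. fst z \<le> m} \<longrightarrow> z \<in> {(x, y). x \<le> y}"
      using good by (intro AE_pmfI) (simp add: case_prod_beta)
  qed simp
  finally have "1 - measure_pmf.prob (binomial_pmf s p) {x. m < x} \<le> measure_pmf.prob \<mu> {(x, y). x \<le> y}" .
  then show ?thesis unfolding dominated_with_def using fst_law snd_law by blast
qed

lemma success_prob_bounds:
  fixes r :: real assumes "0 \<le> r" "r \<le> 1"
  shows "real k * r - (real k * r)^2 \<le> 1 - (1 - r) ^ k" and "1 - (1 - r) ^ k \<le> real k * r"
proof -
  show "1 - (1 - r) ^ k \<le> real k * r"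
    using Bernoulli_inequality[of "-r" k] assms by simp
  have "(1 - r) ^ k \<le> 1 - real k * r + (real k * r)^2"
  proof (induction k)
    case 0 then show ?case by simp
  next
    case (Suc k)
    have "(1 - r) ^ Suc k \<le> (1 - real k * r + (real k * r)^2) * (1 - r)"
      unfolding power_Suc2 using Suc assms by (intro mult_right_mono) auto
    also have "\<dots> = 1 - real (Suc k) * r + (real k * r^2 + (real k)^2 * r^2) - (real k)^2 * r^3"
      by (simp add: algebra_simps power2_eq_square power3_eq_cube)
    also have "\<dots> \<le> 1 - real (Suc k) * r + (real (Suc k) * r)^2"
    proof -
      have "(real k + (real k)^2) * r^2 \<le> (real (Suc k))^2 * r^2"
        by (intro mult_right_mono) (auto simp: power2_eq_square algebra_simps)
      then have "real k * r^2 + (real k)^2 * r^2 \<le> (real (Suc k))^2 * r^2"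
        by (simp add: algebra_simps)
      moreover have "0 \<le> (real k)^2 * r^3" using assms by simp
      ultimately show ?thesis by (simp add: power_mult_distrib)
    qed
    finally show ?case .
  qed
  then show "real k * r - (real k * r)^2 \<le> 1 - (1 - r) ^ k" by simp
qed

lemma binomial_upper_tail:
  assumes "p \<in> {0..1}" "1 \<le> s" "0 \<le> \<epsilon>" "real s * p + \<epsilon> \<le> real m"
  shows "measure_pmf.prob (binomial_pmf s p) {x. m < x} \<le> exp (-2 * \<epsilon>\<^sup>2 / real s)"
proof -
  have bd: "binomial_distribution p" using assms(1) by unfold_locales
  have "measure_pmf.prob (binomial_pmf s p) {x. m < x}
        \<le> measure_pmf.prob (binomial_pmf s p) {x. real x \<ge> real s * p + \<epsilon>}"
    using assms(4) by (intro measure_pmf.finite_measure_mono) auto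
  also have "\<dots> \<le> exp (-2 * \<epsilon>\<^sup>2 / real s)"
    using binomial_distribution.prob_ge[OF bd _ assms(3), of s] assms(2) by simp
  finally show ?thesis .
qed

definition threshold :: "nat \<Rightarrow> nat \<Rightarrow> real \<Rightarrow> nat" where
  "threshold n s r = nat \<lceil>real s ^ 2 * r + sqrt (real s * ln (real n))\<rceil>"

lemma threshold_tail_bound:
  assumes "1 \<le> s" "2 \<le> n" "p \<in> {0..1}" "p \<le> real s * r"
  shows "measure_pmf.prob (binomial_pmf s p) {x. threshold n s r < x} \<le> 1 / real n ^ 2"
proof -
  define \<epsilon> where "\<epsilon> = sqrt (real s * ln (real n))"
  have lnpos: "0 < ln (real n)" using assms(2) by simp
  have "real s * p \<le> real s ^ 2 * r"
    using mult_left_mono[OF assms(4), of "real s"] by (simp add: power2_eq_square)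
  moreover have "real s ^ 2 * r + \<epsilon> \<le> real (threshold n s r)"
    unfolding threshold_def \<epsilon>_def by linarith
  moreover have "0 \<le> \<epsilon>" unfolding \<epsilon>_def using lnpos by simp
  ultimately have "measure_pmf.prob (binomial_pmf s p) {x. threshold n s r < x}
      \<le> exp (-2 * \<epsilon>\<^sup>2 / real s)"
    using binomial_upper_tail[OF assms(3,1)] by force
  also have "-2 * \<epsilon>\<^sup>2 / real s = -2 * ln (real n)"
    unfolding \<epsilon>_def using lnpos assms(1) by simp
  also have "exp (-2 * ln (real n)) = inverse (exp (ln (real n ^ 2)))"
    by (simp add: ln_realpow exp_minus)
  also have "\<dots> = 1 / real n ^ 2"
    using assms(2) by (simp add: field_simps)
  finally show ?thesis .
qed

lemma coupling_error_bound:
  fixes r :: real and s n :: nat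
  assumes "1 \<le> s" "s \<le> n" "2 \<le> n" "0 \<le> r" "r \<le> 1" "threshold n s r \<le> s"
  shows "0 \<le> 1 - (1 - r) ^ (s - threshold n s r) \<and> 1 - (1 - r) ^ (s - threshold n s r) \<le> 1
    \<and> dominated_with (binomial_pmf s (1 - (1 - r) ^ (s - threshold n s r))) (N2_dist n s r)
         (1 / real n ^ 2)"
proof -
  define p where "p = 1 - (1 - r) ^ (s - threshold n s r)"
  have pin: "p \<in> {0..1}" unfolding p_def using assms(4,5) by (auto intro: power_le_one)
  have "p \<le> real (s - threshold n s r) * r"
    unfolding p_def using success_prob_bounds(2) assms(4,5) by blast
  also have "\<dots> \<le> real s * r" using assms(4) by (intro mult_right_mono) auto
  finally have "measure_pmf.prob (binomial_pmf s p) {x. threshold n s r < x} \<le> 1 / real n ^ 2"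
    using threshold_tail_bound[OF assms(1,3) pin] by blast
  moreover have "dominated_with (binomial_pmf s p) (N2_dist n s r)
      (measure_pmf.prob (binomial_pmf s p) {x. threshold n s r < x})"
    unfolding p_def using greedy_coupling assms by simp
  ultimately have "dominated_with (binomial_pmf s p) (N2_dist n s r) (1 / real n ^ 2)"
    unfolding dominated_with_def by force
  then show ?thesis using pin unfolding p_def by simp
qed

text \<open>If k ~ s and s r -> 0 then the success probability 1 - (1 - r)^k is asymptotic to
  s r: it is squeezed between k r (1 - s r) and s r.\<close>
lemma success_prob_asymp_equiv:
  fixes k s :: "'a \<Rightarrow> nat" and r :: "'a \<Rightarrow> real"
  assumes ev: "eventually (\<lambda>n. 0 \<le> r n \<and> r n \<le> 1 \<and> k n \<le> s n) F"
    and ks: "(\<lambda>n. real (k n)) \<sim>[F] (\<lambda>n. real (s n))"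
    and sr: "((\<lambda>n. real (s n) * r n) \<longlongrightarrow> 0) F"
  shows "(\<lambda>n. 1 - (1 - r n) ^ k n) \<sim>[F] (\<lambda>n. real (s n) * r n)"
proof -
  let ?lo = "\<lambda>n. real (k n) * r n * (1 - real (s n) * r n)"
  have "((\<lambda>n. 1 - real (s n) * r n) \<longlongrightarrow> 1) F"
    using tendsto_diff[OF tendsto_const sr, of 1] by simp
  then have "?lo \<sim>[F] (\<lambda>n. real (s n) * r n * 1)"
    by (intro asymp_equiv_mult ks asymp_equiv_refl tendsto_imp_asymp_equiv_const) auto
  then have lo_equiv: "?lo \<sim>[F] (\<lambda>n. real (s n) * r n)" by simp
  have "eventually (\<lambda>n. real (s n) * r n < 1) F"
    using order_tendstoD(2)[OF sr] by simp
  then have bounds: "eventually (\<lambda>n. 0 \<le> ?lo n \<and> ?lo n \<le> 1 - (1 - r n) ^ k n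
      \<and> 1 - (1 - r n) ^ k n \<le> real (s n) * r n) F"
    using ev
  proof eventually_elim
    case (elim n)
    have kr: "real (k n) * r n \<le> real (s n) * r n" using elim by (intro mult_right_mono) auto
    have "?lo n \<le> real (k n) * r n * (1 - real (k n) * r n)"
      using elim kr by (intro mult_left_mono) auto
    also have "\<dots> = real (k n) * r n - (real (k n) * r n)^2" by (simp add: power2_eq_square algebra_simps)
    finally show ?case
      using elim kr success_prob_bounds[of "r n" "k n"] by auto
  qed
  show ?thesis
    by (rule asymp_equiv_sandwich(2)[OF _ _ _ lo_equiv]) (use bounds in \<open>auto elim: eventually_mono\<close>)
qed

lemma diff_asymp_equiv:
  fixes m s :: "'a \<Rightarrow> nat"
  assumes "((\<lambda>n. real (m n) / real (s n)) \<longlongrightarrow> 0) F" "eventually (\<lambda>n. m n \<le> s n \<and> 1 \<le> s n) F"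
  shows "(\<lambda>n. real (s n - m n)) \<sim>[F] (\<lambda>n. real (s n))"
proof (rule asymp_equivI')
  have "((\<lambda>n. 1 - real (m n) / real (s n)) \<longlongrightarrow> 1) F"
    using tendsto_diff[OF tendsto_const assms(1), of 1] by simp
  moreover have "eventually (\<lambda>n. 1 - real (m n) / real (s n) = real (s n - m n) / real (s n)) F"
    using assms(2) by eventually_elim (simp add: of_nat_diff field_simps)
  ultimately show "((\<lambda>n. real (s n - m n) / real (s n)) \<longlongrightarrow> 1) F"
    by (rule Lim_transform_eventually)
qed

text \<open>The threshold is negligible compared with s: m/s <= s r + sqrt (ln n / s) + 1/s.\<close>
lemma threshold_negligible:
  fixes s :: "nat \<Rightarrow> nat" and r :: "nat \<Rightarrow> real"
  assumes ev: "eventually (\<lambda>n. 1 \<le> s n \<and> 0 \<le> r n) sequentially"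
    and sr: "(\<lambda>n. real (s n) * r n) \<longlonglongrightarrow> 0"
    and lns: "(\<lambda>n. ln (real n) / real (s n)) \<longlonglongrightarrow> 0"
  shows "(\<lambda>n. real (threshold n (s n) (r n)) / real (s n)) \<longlonglongrightarrow> 0"
proof -
  have ev2: "eventually (\<lambda>n. 1 \<le> s n \<and> 0 \<le> r n \<and> 2 \<le> n) sequentially"
    using ev eventually_ge_at_top[of 2] by eventually_elim auto
  have inv_s: "(\<lambda>n. 1 / real (s n)) \<longlonglongrightarrow> 0"
  proof (rule tendsto_sandwich[of "\<lambda>_. 0" _ _ "\<lambda>n. (ln (real n) / real (s n)) / ln 2"])
    show "eventually (\<lambda>n. 1 / real (s n) \<le> (ln (real n) / real (s n)) / ln 2) sequentially"
      using ev2 by eventually_elim (simp add: divide_right_mono field_simps)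
    show "(\<lambda>n. (ln (real n) / real (s n)) / ln 2) \<longlonglongrightarrow> 0"
      using tendsto_divide_zero[OF lns, of "ln 2"] by simp
  qed auto
  have "(\<lambda>n. real (s n) * r n + sqrt (ln (real n) / real (s n)) + 1 / real (s n)) \<longlonglongrightarrow> 0 + sqrt 0 + 0"
    by (intro tendsto_add sr inv_s tendsto_real_sqrt lns)
  then have bound_lim: "(\<lambda>n. real (s n) * r n + sqrt (ln (real n) / real (s n)) + 1 / real (s n)) \<longlonglongrightarrow> 0"
    by simp
  have bound: "eventually (\<lambda>n. real (threshold n (s n) (r n)) / real (s n)
      \<le> real (s n) * r n + sqrt (ln (real n) / real (s n)) + 1 / real (s n)) sequentially"
    using ev2
  proof eventually_elim
    case (elim n)
    have s0: "real (s n) > 0" using elim by simp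
    have "sqrt (real (s n) * ln (real n)) = sqrt (real (s n) ^ 2) * sqrt (ln (real n) / real (s n))"
      unfolding real_sqrt_mult[symmetric] using s0 by (simp add: power2_eq_square)
    then have "sqrt (real (s n) * ln (real n)) = real (s n) * sqrt (ln (real n) / real (s n))"
      by simp
    moreover have "0 \<le> real (s n) ^ 2 * r n + sqrt (real (s n) * ln (real n))"
      using elim by simp
    then have "real (threshold n (s n) (r n))
        \<le> real (s n) ^ 2 * r n + sqrt (real (s n) * ln (real n)) + 1"
      unfolding threshold_def by linarith
    ultimately show ?case using s0 by (simp add: field_simps power2_eq_square)
  qed
  show ?thesis
    by (rule tendsto_sandwich[OF _ bound tendsto_const bound_lim]) simp
qed

lemma threshold_asymptotics:
  fixes s :: "nat \<Rightarrow> nat" and r :: "nat \<Rightarrow> real"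
  assumes ev: "eventually (\<lambda>n. 1 \<le> s n \<and> 0 \<le> r n \<and> r n \<le> 1) sequentially"
    and sr: "(\<lambda>n. real (s n) * r n) \<longlonglongrightarrow> 0"
    and lns: "(\<lambda>n. ln (real n) / real (s n)) \<longlonglongrightarrow> 0"
  shows "eventually (\<lambda>n. threshold n (s n) (r n) \<le> s n) sequentially"
    and "(\<lambda>n. 1 - (1 - r n) ^ (s n - threshold n (s n) (r n))) \<sim>[sequentially] (\<lambda>n. real (s n) * r n)"
proof -
  have "eventually (\<lambda>n. 1 \<le> s n \<and> 0 \<le> r n) sequentially"
    using ev by eventually_elim auto
  from threshold_negligible[OF this sr lns]
  have m_small: "(\<lambda>n. real (threshold n (s n) (r n)) / real (s n)) \<longlonglongrightarrow> 0" .
  show m_le: "eventually (\<lambda>n. threshold n (s n) (r n) \<le> s n) sequentially"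
    using order_tendstoD(2)[OF m_small zero_less_one] ev by eventually_elim (simp add: divide_less_eq)
  have "eventually (\<lambda>n. threshold n (s n) (r n) \<le> s n \<and> 1 \<le> s n) sequentially"
    using m_le ev by eventually_elim auto
  from diff_asymp_equiv[OF m_small this]
  have k_equiv: "(\<lambda>n. real (s n - threshold n (s n) (r n))) \<sim>[sequentially] (\<lambda>n. real (s n))" .
  have "eventually (\<lambda>n. 0 \<le> r n \<and> r n \<le> 1 \<and> s n - threshold n (s n) (r n) \<le> s n) sequentially"
    using ev by eventually_elim auto
  from success_prob_asymp_equiv[OF this k_equiv sr]
  show "(\<lambda>n. 1 - (1 - r n) ^ (s n - threshold n (s n) (r n))) \<sim>[sequentially] (\<lambda>n. real (s n) * r n)" .
qed

lemma scaled_prob_tendsto_zero: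
  fixes s :: "'a \<Rightarrow> nat" and r g :: "'a \<Rightarrow> real"
  assumes "eventually (\<lambda>n. real (s n) = g n) F" "r \<in> o[F](\<lambda>n. 1 / g n)"
  shows "((\<lambda>n. real (s n) * r n) \<longlongrightarrow> 0) F"
proof -
  have "((\<lambda>n. r n / (1 / g n)) \<longlongrightarrow> 0) F"
    using smalloD_tendsto[OF assms(2)] .
  moreover have "eventually (\<lambda>n. r n / (1 / g n) = real (s n) * r n) F"
    using assms(1) by eventually_elim simp
  ultimately show ?thesis by (rule Lim_transform_eventually)
qed

text \<open>If s = C' h with C' >= 1 and s >= 1, then h <= s, so ln n = o(h) gives ln n = o(s).\<close>
lemma ln_over_size_tendsto_zero:
  fixes s :: "nat \<Rightarrow> nat" and C' h :: "nat \<Rightarrow> real"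
  assumes "eventually (\<lambda>n. real (s n) = C' n * h n \<and> 1 \<le> s n \<and> 1 \<le> C' n) sequentially"
    and "(\<lambda>n. ln (real n)) \<in> o(h)"
  shows "(\<lambda>n. ln (real n) / real (s n)) \<longlonglongrightarrow> 0"
proof -
  have "h \<in> O(\<lambda>n. real (s n))"
  proof (rule bigoI[where c = 1])
    show "eventually (\<lambda>n. norm (h n) \<le> 1 * norm (real (s n))) sequentially"
      using assms(1)
    proof eventually_elim
      case (elim n)
      then have "0 < C' n * h n" by simp
      then have "0 < h n" using elim by (simp add: zero_less_mult_iff)
      then have "1 * h n \<le> C' n * h n" using elim by (intro mult_right_mono) auto
      then show ?case using \<open>0 < h n\<close> elim by simp
    qed
  qed
  then have "(\<lambda>n. ln (real n)) \<in> o(\<lambda>n. real (s n))"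
    using assms(2) by (rule landau_o.small_big_trans[rotated])
  then show ?thesis by (rule smalloD_tendsto)
qed

lemma inverse_square_negligible: "(\<lambda>n::nat. 1 / real n ^ 2) \<in> o(\<lambda>n. 1 / real n)"
  by real_asymp

theorem mainTheorem16:
  fixes q C' r :: "nat \<Rightarrow> real" and s :: "nat \<Rightarrow> nat"
  assumes s_def: "\<forall>\<^sub>F n in sequentially. real (s n) = C' n * real n * q n"
    and s_pos: "\<forall>\<^sub>F n in sequentially. 1 \<le> s n \<and> s n \<le> n"
    and C'_ge: "\<forall>\<^sub>F n in sequentially. C' n \<ge> 1"
    and r_prob: "\<forall>\<^sub>F n in sequentially. 0 \<le> r n \<and> r n \<le> 1"
    and ln_small: "(\<lambda>n. ln (real n)) \<in> o(\<lambda>n. real n * q n)"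
    and r_small: "r \<in> o(\<lambda>n. 1 / (C' n * real n * q n))"
  shows "\<exists>s2 :: nat \<Rightarrow> real. \<exists>eps :: nat \<Rightarrow> real.
           s2 \<sim>[sequentially] (\<lambda>n. C' n * real n * q n * r n) \<and>
           eps \<in> o(\<lambda>n. 1 / real n) \<and>
           (\<forall>\<^sub>F n in sequentially. 0 \<le> s2 n \<and> s2 n \<le> 1 \<and>
              dominated_with (binomial_pmf (s n) (s2 n)) (N2_dist n (s n) (r n)) (eps n))"
proof -
  define s2 where "s2 n = 1 - (1 - r n) ^ (s n - threshold n (s n) (r n))" for n
  define eps where "eps n = 1 / real n ^ 2" for n :: nat
  have ev: "\<forall>\<^sub>F n in sequentially. real (s n) = C' n * (real n * q n) \<and> 1 \<le> s n \<and> s n \<le> n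
      \<and> 1 \<le> C' n \<and> 0 \<le> r n \<and> r n \<le> 1 \<and> 2 \<le> n"
    using s_def s_pos C'_ge r_prob eventually_ge_at_top[of 2] by eventually_elim auto
  have sr: "(\<lambda>n. real (s n) * r n) \<longlonglongrightarrow> 0"
    using scaled_prob_tendsto_zero[OF s_def r_small] .
  have "\<forall>\<^sub>F n in sequentially. real (s n) = C' n * (real n * q n) \<and> 1 \<le> s n \<and> 1 \<le> C' n"
    using ev by eventually_elim auto
  from ln_over_size_tendsto_zero[OF this ln_small]
  have lns: "(\<lambda>n. ln (real n) / real (s n)) \<longlonglongrightarrow> 0" .
  have "\<forall>\<^sub>F n in sequentially. 1 \<le> s n \<and> 0 \<le> r n \<and> r n \<le> 1"
    using ev by eventually_elim auto
  note threshold = threshold_asymptotics[OF this sr lns]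
  have "s2 \<sim>[sequentially] (\<lambda>n. real (s n) * r n)"
    unfolding s2_def by (rule threshold(2))
  then have equiv: "s2 \<sim>[sequentially] (\<lambda>n. C' n * real n * q n * r n)"
    by (rule asymp_equiv_transfer) (use s_def in \<open>auto elim: eventually_mono\<close>)
  have coupled: "\<forall>\<^sub>F n in sequentially. 0 \<le> s2 n \<and> s2 n \<le> 1 \<and>
      dominated_with (binomial_pmf (s n) (s2 n)) (N2_dist n (s n) (r n)) (eps n)"
    using ev threshold(1) unfolding s2_def eps_def
    by eventually_elim (rule coupling_error_bound; simp)
  have "eps \<in> o(\<lambda>n. 1 / real n)"
    unfolding eps_def by (rule inverse_square_negligible)
  then show ?thesis using equiv coupled by blast
qed

end
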